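(* Let $G$ be a factor-critical equimatchable graph. Then $G$ is edge-stable if and only if there is no set $R$ of three vertices of $G$ inducing a copy of $\overline{P_3}$ (i.e. $G[R]$ has exactly one edge) such that $G\setminus R$ has a perfect matching.
   Context: All graphs are finite and simple. A graph is equimatchable if all its maximal matchings have the same cardinality; an equimatchable graph $G$ is edge-stable if $G\setminus e$ (delete edge $e$, keep vertices) is equimatchable for every $e\in E(G)$. A graph $G$ is factor-critical if $G-v$ has a perfect matching for every $v\in V(G)$. $\overline{P_3}$ is the complement of the path on three vertices, i.e. one edge plus an isolated vertex. For $R\subseteq V(G)$, $G\setminus R$ is the subgraph induced by $V(G)\setminus R$. *)

theory Defs
  imports Main
begin

definition graph :: "'a set \<Rightarrow> 'a set set \<Rightarrow> bool" where
  "graph V E \<longleftrightarrow> finite V \<and> (\<forall>e\<in>E. \<exists>u v. e = {u, v} \<and> u \<noteq> v \<and> u \<in> V \<and> v \<in> V)"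

definition matching :: "'a set set \<Rightarrow> 'a set set \<Rightarrow> bool" where
  "matching E M \<longleftrightarrow> M \<subseteq> E \<and> (\<forall>e1\<in>M. \<forall>e2\<in>M. e1 \<noteq> e2 \<longrightarrow> e1 \<inter> e2 = {})"

definition maximal_matching :: "'a set set \<Rightarrow> 'a set set \<Rightarrow> bool" where
  "maximal_matching E M \<longleftrightarrow> matching E M \<and> (\<forall>e\<in>E - M. \<not> matching E (insert e M))"

definition equimatchable :: "'a set \<Rightarrow> 'a set set \<Rightarrow> bool" where
  "equimatchable V E \<longleftrightarrow>
     (\<forall>M1 M2. maximal_matching E M1 \<longrightarrow> maximal_matching E M2 \<longrightarrow> card M1 = card M2)"

definition edge_stable :: "'a set \<Rightarrow> 'a set set \<Rightarrow> bool" where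
  "edge_stable V E \<longleftrightarrow> equimatchable V E \<and> (\<forall>e\<in>E. equimatchable V (E - {e}))"

definition perfect_matching :: "'a set \<Rightarrow> 'a set set \<Rightarrow> 'a set set \<Rightarrow> bool" where
  "perfect_matching V E M \<longleftrightarrow> matching E M \<and> \<Union>M = V"

definition induced :: "'a set set \<Rightarrow> 'a set \<Rightarrow> 'a set set" where
  "induced E S = {e \<in> E. e \<subseteq> S}"

definition has_perfect_matching :: "'a set \<Rightarrow> 'a set set \<Rightarrow> bool" where
  "has_perfect_matching V E \<longleftrightarrow> (\<exists>M. perfect_matching V E M)"

definition factor_critical :: "'a set \<Rightarrow> 'a set set \<Rightarrow> bool" where
  "factor_critical V E \<longleftrightarrow>
     (\<forall>v\<in>V. has_perfect_matching (V - {v}) (induced E (V - {v})))"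

end

theory Submission
  imports Defs
begin

text \<open>A matching is maximal exactly when the vertices it leaves uncovered span no edge. Removing
  a vertex u of an edge e from the factor-critical graph G leaves a perfect matching N; its only
  uncovered vertex is u, so N is maximal both in G and in G - e, and |N| = (n - 1)/2. A maximal
  matching M of G - e that is not maximal in G extends by e to a maximal matching of G, so by
  equimatchability |M| = |N| - 1: the three vertices left uncovered by M span only e, and M is a
  perfect matching of the rest. Conversely, if R spans only e and G \<setminus> R has a perfect matching M,
  then M is maximal in G - e but smaller than N.\<close>

lemma graph_subset: "graph V E \<Longrightarrow> F \<subseteq> E \<Longrightarrow> graph V F"
  by (auto simp: graph_def)

lemma graph_finite_edges:
  assumes "graph V E"
  shows "finite E"
proof -
  have "E \<subseteq> Pow V" "finite V" using assms by (auto simp: graph_def)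
  then show ?thesis by (meson finite_Pow_iff finite_subset)
qed

lemma graph_edge: "graph V E \<Longrightarrow> e \<in> E \<Longrightarrow> card e = 2 \<and> e \<subseteq> V"
  by (auto simp: graph_def)

lemma matching_insert_iff:
  "f \<notin> M \<Longrightarrow> matching F (insert f M) \<longleftrightarrow> matching F M \<and> f \<in> F \<and> f \<inter> \<Union>M = {}"
  unfolding matching_def insert_subset ball_simps by (smt (verit) Int_commute Sup_inf_eq_bot_iff)

lemma maximal_matching_iff: "maximal_matching F M \<longleftrightarrow> matching F M \<and> (\<forall>f\<in>F - M. f \<inter> \<Union>M \<noteq> {})"
  by (auto simp: maximal_matching_def matching_insert_iff)

lemma maximal_matching_iff_uncovered_independent:
  assumes "graph V F"
  shows "maximal_matching F M \<longleftrightarrow> matching F M \<and> induced F (V - \<Union>M) = {}"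
proof -
  have edge: "f \<noteq> {}" "f \<subseteq> V" if "f \<in> F" for f
    using graph_edge[OF assms that] by auto
  have free: "f \<inter> \<Union>M = {} \<longleftrightarrow> f \<subseteq> V - \<Union>M" if "f \<in> F" for f
    using edge(2)[OF that] by blast
  have covered: "f \<notin> M" if "f \<in> F" "f \<subseteq> V - \<Union>M" for f
    using edge(1)[OF that(1)] that(2) by blast
  have "(\<forall>f\<in>F - M. f \<inter> \<Union>M \<noteq> {}) \<longleftrightarrow> (\<forall>f\<in>F. \<not> f \<subseteq> V - \<Union>M)"
    by (metis DiffD1 DiffI covered free)
  then show ?thesis
    unfolding maximal_matching_iff induced_def by auto
qed

lemma Union_matching_subset: "graph V E \<Longrightarrow> matching E M \<Longrightarrow> \<Union>M \<subseteq> V"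
  by (auto simp: graph_def matching_def)

lemma card_Union_matching:
  assumes g: "graph V E" and M: "matching E M"
  shows "card (\<Union>M) = 2 * card M"
proof -
  have edges: "card f = 2" if "f \<in> M" for f
    using that M graph_edge[OF g] by (auto simp: matching_def)
  have "card (\<Union>M) = sum card M"
  proof (rule card_Union_disjoint)
    show "pairwise disjnt M" using M by (auto simp: matching_def pairwise_def disjnt_def)
    show "finite f" if "f \<in> M" for f using edges[OF that] card.infinite by fastforce
  qed
  also have "\<dots> = 2 * card M" using edges by simp
  finally show ?thesis .
qed

lemma card_uncovered:
  assumes "graph V E" "matching E M"
  shows "card (V - \<Union>M) + 2 * card M = card V"
proof -
  have "finite V" using assms(1) by (simp add: graph_def)
  moreover have "\<Union>M \<subseteq> V" "card (\<Union>M) = 2 * card M"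
    using Union_matching_subset[OF assms] card_Union_matching[OF assms] by auto
  ultimately show ?thesis
    using card_mono[of V "\<Union>M"] by (simp add: card_Diff_subset finite_subset)
qed

lemma perfect_matching_induced_iff:
  "perfect_matching S (induced E S) M \<longleftrightarrow> matching E M \<and> \<Union>M = S"
  unfolding perfect_matching_def matching_def induced_def by blast

lemma maximal_matching_delete_edge:
  assumes M: "maximal_matching (E - {e}) M" and e: "e \<in> E"
  shows "maximal_matching E M \<or> e \<notin> M \<and> maximal_matching E (insert e M)"
proof -
  have M_E: "matching E M" and eM: "e \<notin> M" and blocked: "\<forall>f\<in>E - {e} - M. f \<inter> \<Union>M \<noteq> {}"
    using M by (auto simp: maximal_matching_iff matching_def)
  show ?thesis
  proof (cases "e \<inter> \<Union>M = {}")
    case True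
    have "\<forall>f\<in>E - insert e M. f \<inter> \<Union>(insert e M) \<noteq> {}" using blocked by blast
    then have "maximal_matching E (insert e M)"
      using True e eM M_E by (simp add: maximal_matching_iff matching_insert_iff)
    then show ?thesis using eM by blast
  next
    case False
    then have "\<forall>f\<in>E - M. f \<inter> \<Union>M \<noteq> {}" using blocked by blast
    then show ?thesis using M_E by (simp add: maximal_matching_iff)
  qed
qed

lemma maximal_matching_if_card_uncovered_le_1:
  assumes g: "graph V F" and M: "matching F M" and uncovered: "card (V - \<Union>M) \<le> 1"
  shows "maximal_matching F M"
proof -
  have "finite V" using g by (simp add: graph_def)
  have "\<not> f \<subseteq> V - \<Union>M" if "f \<in> F" for f
    using graph_edge[OF g that] card_mono[of "V - \<Union>M" f] \<open>finite V\<close> uncovered by auto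
  then have "induced F (V - \<Union>M) = {}" by (auto simp: induced_def)
  with M show ?thesis by (simp add: maximal_matching_iff_uncovered_independent[OF g])
qed

lemma maximal_matching_delete_uncovered_edge:
  assumes g: "graph V E" and M: "matching E M" and uncovered: "induced E (V - \<Union>M) = {e}"
  shows "maximal_matching (E - {e}) M"
proof -
  have "e \<subseteq> V - \<Union>M" "e \<in> E" using uncovered by (auto simp: induced_def)
  moreover have "e \<noteq> {}" using graph_edge[OF g \<open>e \<in> E\<close>] by auto
  ultimately have "e \<notin> M" by blast
  then have "matching (E - {e}) M" using M by (auto simp: matching_def)
  moreover have "induced (E - {e}) (V - \<Union>M) = {}" using uncovered by (auto simp: induced_def)
  ultimately show ?thesis
    by (simp add: maximal_matching_iff_uncovered_independent[OF graph_subset[OF g, of "E - {e}"]])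
qed

lemma induced_uncovered_delete_edge:
  assumes g: "graph V E" and e: "e \<in> E"
    and M: "maximal_matching (E - {e}) M" and not_max: "\<not> maximal_matching E M"
  shows "induced E (V - \<Union>M) = {e}"
proof -
  have "e \<notin> M" and "maximal_matching E (insert e M)"
    using maximal_matching_delete_edge[OF M e] not_max by auto
  then have "e \<inter> \<Union>M = {}" by (simp add: maximal_matching_iff matching_insert_iff)
  then have "e \<subseteq> V - \<Union>M" using graph_edge[OF g e] by blast
  moreover have "induced (E - {e}) (V - \<Union>M) = {}"
    using M by (simp add: maximal_matching_iff_uncovered_independent[OF graph_subset[OF g, of "E - {e}"]])
  ultimately show ?thesis using e by (auto simp: induced_def)
qed

lemma factor_critical_maximal_matching_avoiding_edge:
  assumes g: "graph V E" and fc: "factor_critical V E" and e: "e \<in> E"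
  shows "\<exists>N. maximal_matching (E - {e}) N \<and> maximal_matching E N \<and> 1 + 2 * card N = card V"
proof -
  obtain u where u: "u \<in> e" "u \<in> V"
    using graph_edge[OF g e] by (metis card.empty ex_in_conv subsetD zero_neq_numeral)
  then obtain N where N: "perfect_matching (V - {u}) (induced E (V - {u})) N"
    using fc by (auto simp: factor_critical_def has_perfect_matching_def)
  then have N_E: "matching E N" and uncovered: "V - \<Union>N = {u}"
    using u by (auto simp: perfect_matching_induced_iff)
  have "e \<notin> N" using uncovered u by blast
  then have N_del: "matching (E - {e}) N"
    using N_E by (auto simp: matching_def)
  show ?thesis
  proof (intro exI conjI)
    show "maximal_matching (E - {e}) N"
      using maximal_matching_if_card_uncovered_le_1[OF graph_subset[OF g] N_del] uncovered by simp
    show "maximal_matching E N"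
      using maximal_matching_if_card_uncovered_le_1[OF g N_E] uncovered by simp
    show "1 + 2 * card N = card V" using card_uncovered[OF g N_E] uncovered by simp
  qed
qed

lemma equimatchable_delete_edge_iff:
  assumes g: "graph V E" and fc: "factor_critical V E" and eq: "equimatchable V E" and e: "e \<in> E"
  shows "equimatchable V (E - {e}) \<longleftrightarrow>
    \<not> (\<exists>R. R \<subseteq> V \<and> card R = 3 \<and> induced E R = {e} \<and>
          has_perfect_matching (V - R) (induced E (V - R)))"
proof -
  obtain N where N_del: "maximal_matching (E - {e}) N" and N_max: "maximal_matching E N"
    and card_N: "1 + 2 * card N = card V"
    using factor_critical_maximal_matching_avoiding_edge[OF g fc e] by blast
  show ?thesis
  proof
    assume eq_del: "equimatchable V (E - {e})"
    show "\<not> (\<exists>R. R \<subseteq> V \<and> card R = 3 \<and> induced E R = {e} \<and>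
          has_perfect_matching (V - R) (induced E (V - R)))"
    proof (intro notI, elim exE conjE)
      fix R assume R: "R \<subseteq> V" "card R = 3" "induced E R = {e}"
        and "has_perfect_matching (V - R) (induced E (V - R))"
      then obtain M where M: "matching E M" "\<Union>M = V - R"
        by (auto simp: has_perfect_matching_def perfect_matching_induced_iff)
      have uncovered: "V - \<Union>M = R" using M(2) R(1) by blast
      then have "maximal_matching (E - {e}) M"
        using maximal_matching_delete_uncovered_edge[OF g M(1)] R(3) by simp
      then have "card M = card N" using eq_del N_del unfolding equimatchable_def by blast
      moreover have "card R + 2 * card M = card V" using card_uncovered[OF g M(1)] uncovered by simp
      ultimately show False using R(2) card_N by linarith
    qed
  next
    assume no_R: "\<not> (\<exists>R. R \<subseteq> V \<and> card R = 3 \<and> induced E R = {e} \<and>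
          has_perfect_matching (V - R) (induced E (V - R)))"
    have "card M = card N" if M: "maximal_matching (E - {e}) M" for M
    proof (rule ccontr)
      assume card_M: "card M \<noteq> card N"
      then have not_max: "\<not> maximal_matching E M" using eq N_max unfolding equimatchable_def by blast
      then have eM: "e \<notin> M" and M_ins: "maximal_matching E (insert e M)"
        using maximal_matching_delete_edge[OF M e] by auto
      then have M_E: "matching E M" by (simp add: maximal_matching_iff matching_insert_iff)
      have "finite M" using graph_finite_edges[OF g] M_E finite_subset by (auto simp: matching_def)
      moreover have "card (insert e M) = card N"
        using eq M_ins N_max unfolding equimatchable_def by blast
      ultimately have "card M + 1 = card N" using eM by simp
      then have "card (V - \<Union>M) = 3" using card_uncovered[OF g M_E] card_N by simp
      moreover have "V - (V - \<Union>M) = \<Union>M" using Union_matching_subset[OF g M_E] by blast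
      then have "has_perfect_matching (V - (V - \<Union>M)) (induced E (V - (V - \<Union>M)))"
        using M_E by (auto simp: has_perfect_matching_def perfect_matching_induced_iff)
      ultimately show False
        using no_R induced_uncovered_delete_edge[OF g e M not_max] by blast
    qed
    then show "equimatchable V (E - {e})" by (auto simp: equimatchable_def)
  qed
qed

theorem lemma3p2:
  fixes V :: "'a set" and E :: "'a set set"
  assumes "graph V E" and "factor_critical V E" and "equimatchable V E"
  shows "edge_stable V E \<longleftrightarrow>
    \<not> (\<exists>R. R \<subseteq> V \<and> card R = 3 \<and> card (induced E R) = 1 \<and>
            has_perfect_matching (V - R) (induced E (V - R)))"
proof -
  have "edge_stable V E \<longleftrightarrow> (\<forall>e\<in>E. \<not> (\<exists>R. R \<subseteq> V \<and> card R = 3 \<and> induced E R = {e} \<and>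
          has_perfect_matching (V - R) (induced E (V - R))))"
    using equimatchable_delete_edge_iff[OF assms] assms(3) by (simp add: edge_stable_def)
  also have "\<dots> \<longleftrightarrow> \<not> (\<exists>R. R \<subseteq> V \<and> card R = 3 \<and> card (induced E R) = 1 \<and>
          has_perfect_matching (V - R) (induced E (V - R)))"
    by (auto simp: card_1_singleton_iff) (auto simp: induced_def)
  finally show ?thesis .
qed

end
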